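(* The lamplighter group $\mathbb Z_2\wr\mathbb Z$ has property (PPT).
   Context: $\mathbb Z_2\wr\mathbb Z=\left(\bigoplus_{\mathbb Z}\mathbb Z_2\right)\rtimes\mathbb Z$, where $\mathbb Z$ acts by shifting coordinates; equivalently $\langle a,t\mid a^2=1,\ [t^iat^{-i},t^jat^{-j}]=1\ \forall i,j\in\mathbb Z\rangle$. An isometric action on a metric space $Z$ is proper if for all $z\in Z$, $r>0$, $\{g: d(z,gz)\le r\}$ is finite. A quasi-tree is a geodesic metric space quasi-isometric to a simplicial tree. A group has property (PPT) if there exist unbounded proper quasi-trees $X_1,\ldots,X_l$ on which it acts isometrically and cocompactly such that the diagonal action on $\prod_{i=1}^lX_i$ with the $\ell^1$-metric is proper. *)

theory Defs
  imports "HOL-Analysis.Analysis" "HOL-Algebra.Group_Action"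
begin

text \<open>Elements are pairs (f, n): f a finitely supported configuration of lamps
  (f i = True meaning the lamp at i is on, i.e. the Z_2 coordinate is 1) and n in Z.
  Multiplication: (f,n)(g,m) = (f + shift^n g, n+m), where (shift^n g) i = g (i - n)
  and + in Z_2 is exclusive or.\<close>

definition lamplighter :: "((int \<Rightarrow> bool) \<times> int) monoid" where
  "lamplighter =
     \<lparr> carrier = {(f, n). finite {i. f i}},
       mult = (\<lambda>(f, n) (g, m). ((\<lambda>i. f i \<noteq> g (i - n)), n + m)),
       one = ((\<lambda>i. False), 0) \<rparr>"

definition proper_metric :: "'a metric \<Rightarrow> bool" where
  "proper_metric m \<longleftrightarrow>
     (\<forall>x \<in> mspace m. \<forall>r. compactin (mtopology_of m) (mcball_of m x r))"

definition unbounded_metric :: "'a metric \<Rightarrow> bool" where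
  "unbounded_metric m \<longleftrightarrow> \<not> Metric_space.mbounded (mspace m) (mdist m) (mspace m)"

definition geodesic_metric :: "'a metric \<Rightarrow> bool" where
  "geodesic_metric m \<longleftrightarrow>
     (\<forall>x \<in> mspace m. \<forall>y \<in> mspace m. \<exists>\<gamma>.
        \<gamma> 0 = x \<and> \<gamma> (mdist m x y) = y \<and>
        (\<forall>t \<in> {0..mdist m x y}. \<gamma> t \<in> mspace m) \<and>
        (\<forall>s \<in> {0..mdist m x y}. \<forall>t \<in> {0..mdist m x y}. mdist m (\<gamma> s) (\<gamma> t) = \<bar>s - t\<bar>))"

definition quasi_isometric ::
    "'a set \<Rightarrow> ('a \<Rightarrow> 'a \<Rightarrow> real) \<Rightarrow> 'b set \<Rightarrow> ('b \<Rightarrow> 'b \<Rightarrow> real) \<Rightarrow> bool" where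
  "quasi_isometric S d T e \<longleftrightarrow>
     (\<exists>f L C. f ` S \<subseteq> T \<and> L \<ge> 1 \<and> C \<ge> 0 \<and>
        (\<forall>x \<in> S. \<forall>y \<in> S. d x y / L - C \<le> e (f x) (f y) \<and> e (f x) (f y) \<le> L * d x y + C) \<and>
        (\<forall>z \<in> T. \<exists>x \<in> S. e z (f x) \<le> C))"

definition walk :: "('v \<Rightarrow> 'v \<Rightarrow> bool) \<Rightarrow> 'v list \<Rightarrow> bool" where
  "walk E p \<longleftrightarrow> p \<noteq> [] \<and> (\<forall>i. Suc i < length p \<longrightarrow> E (p ! i) (p ! Suc i))"

definition graph_dist :: "('v \<Rightarrow> 'v \<Rightarrow> bool) \<Rightarrow> 'v \<Rightarrow> 'v \<Rightarrow> real" where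
  "graph_dist E u v =
     real (LEAST n. \<exists>p. walk E p \<and> length p = Suc n \<and> hd p = u \<and> last p = v)"

definition simplicial_tree :: "'v set \<Rightarrow> ('v \<Rightarrow> 'v \<Rightarrow> bool) \<Rightarrow> bool" where
  "simplicial_tree V E \<longleftrightarrow>
     V \<noteq> {} \<and>
     (\<forall>u v. E u v \<longrightarrow> u \<in> V \<and> v \<in> V \<and> u \<noteq> v \<and> E v u) \<and>
     (\<forall>u \<in> V. \<forall>v \<in> V. \<exists>p. walk E p \<and> hd p = u \<and> last p = v) \<and>
     \<not> (\<exists>p. walk E p \<and> distinct p \<and> length p \<ge> 3 \<and> E (last p) (hd p))"

text \<open>A quasi-tree: geodesic metric space quasi-isometric to a simplicial tree
  (equipped with its combinatorial path metric on vertices, which is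
  quasi-isometric to its geometric realisation). Tree vertices are taken in type real
  (no loss of generality).\<close>

definition quasi_tree :: "'a metric \<Rightarrow> bool" where
  "quasi_tree m \<longleftrightarrow> geodesic_metric m \<and>
     (\<exists>(V :: real set) E. simplicial_tree V E \<and>
        quasi_isometric (mspace m) (mdist m) V (graph_dist E))"

definition isometric_action :: "('g, 'c) monoid_scheme \<Rightarrow> 'a metric \<Rightarrow> ('g \<Rightarrow> 'a \<Rightarrow> 'a) \<Rightarrow> bool" where
  "isometric_action G m \<phi> \<longleftrightarrow> group_action G (mspace m) \<phi> \<and>
     (\<forall>g \<in> carrier G. \<forall>x \<in> mspace m. \<forall>y \<in> mspace m. mdist m (\<phi> g x) (\<phi> g y) = mdist m x y)"

definition cocompact_action :: "('g, 'c) monoid_scheme \<Rightarrow> 'a metric \<Rightarrow> ('g \<Rightarrow> 'a \<Rightarrow> 'a) \<Rightarrow> bool" where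
  "cocompact_action G m \<phi> \<longleftrightarrow>
     (\<exists>K. compactin (mtopology_of m) K \<and> (\<Union>g \<in> carrier G. \<phi> g ` K) = mspace m)"

text \<open>Property (PPT), with the spaces X_1..X_l indexed by i < l; all carriers
  live in type real (no loss of generality for proper metric spaces).\<close>

definition PPT :: "('g, 'c) monoid_scheme \<Rightarrow> bool" where
  "PPT G \<longleftrightarrow> (\<exists>(l :: nat) (X :: nat \<Rightarrow> real metric) (\<phi> :: nat \<Rightarrow> 'g \<Rightarrow> real \<Rightarrow> real).
     (\<forall>i < l. unbounded_metric (X i) \<and> proper_metric (X i) \<and> quasi_tree (X i) \<and>
              isometric_action G (X i) (\<phi> i) \<and> cocompact_action G (X i) (\<phi> i)) \<and>
     (\<forall>z. (\<forall>i < l. z i \<in> mspace (X i)) \<longrightarrow> (\<forall>r > 0.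
        finite {g \<in> carrier G. (\<Sum>i < l. mdist (X i) (z i) (\<phi> i g (z i))) \<le> r})))"

end

theory Submission
  imports Defs
begin

(*
  Z_2 wr Z acts on the tree T whose points are pairs (h, a) of a height h in R and a finite
  set a of lit lamps, all at positions below h. The ancestor of (h, a) at height t <= h is
  (t, {i in a. i < t}); two points branch at the highest height where they have a common
  ancestor, and their distance is the length of the path through the branch point. The
  points of integer height are the vertices of a simplicial tree whose realisation is T:
  (n, a) has the single lower neighbour (n - 1, a - {n - 1}) and the two upper neighbours
  (n + 1, a) and (n + 1, a + {n}). So T is a quasi-tree.

  The element (f, n) raises heights by n, shifts the lamps by n and toggles the lamps of f
  (keeping only those below the new height). This is an isometric action, and it is
  cocompact since the points (t, {}), -1 <= t <= 0, meet every orbit. The displacement of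
  (0, {}) under (f, n) is at least |n|, and at least n - 2i for every lamp i < n of f, so it
  bounds |n| and the lamps of f from below. Precomposing with the automorphism of Z_2 wr Z
  induced by i |-> -i gives a second action, whose displacement bounds the lamps of f from
  above. Hence only finitely many elements move a given point of T x T by a bounded amount.
  Finally T is transported to a subset of the real line by an injective encoding, as (PPT)
  asks for spaces of reals.
*)

lemma walk_Cons: "walk E (x # xs) \<longleftrightarrow> xs = [] \<or> (E x (hd xs) \<and> walk E xs)"
  by (cases xs) (auto simp: walk_def nth_Cons' less_Suc_eq_0_disj)

context Metric_space
begin

lemma walk_mdist_le:
  assumes edge: "\<And>u v. E u v \<Longrightarrow> u \<in> M \<and> v \<in> M \<and> d u v = 1"
    and "walk E p" "hd p \<in> M"
  shows "last p \<in> M \<and> d (hd p) (last p) \<le> real (length p - 1)"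
  using assms(2,3)
proof (induction p)
  case Nil
  then show ?case by (simp add: walk_def)
next
  case (Cons x xs)
  show ?case
  proof (cases "xs = []")
    case True
    then show ?thesis using Cons.prems by simp
  next
    case False
    then have "E x (hd xs)" "walk E xs" using Cons.prems(1) by (auto simp: walk_Cons)
    then have IH: "last xs \<in> M \<and> d (hd xs) (last xs) \<le> real (length xs - 1)"
      and x: "x \<in> M" "hd xs \<in> M" "d x (hd xs) = 1"
      using Cons.IH edge by auto
    have "d x (last xs) \<le> d x (hd xs) + d (hd xs) (last xs)"
      using triangle x IH by blast
    with IH x False show ?thesis by (cases xs) auto
  qed
qed

lemma walk_exists_if_descent:
  assumes descent: "\<And>u v. u \<in> V \<Longrightarrow> v \<in> V \<Longrightarrow> u \<noteq> v \<Longrightarrow> \<exists>w\<in>V. E u w \<and> d w v \<le> d u v - 1"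
    and "V \<subseteq> M" "u \<in> V" "v \<in> V" "d u v \<le> real n"
  shows "\<exists>p. walk E p \<and> hd p = u \<and> last p = v \<and> length p \<le> Suc n"
  using assms(3-5)
proof (induction n arbitrary: u)
  case 0
  then have "u = v" using zero nonneg \<open>V \<subseteq> M\<close> by (metis antisym of_nat_0 subsetD)
  then show ?case by (intro exI[of _ "[u]"]) (simp add: walk_def)
next
  case (Suc n)
  show ?case
  proof (cases "u = v")
    case True
    then show ?thesis by (intro exI[of _ "[u]"]) (simp add: walk_def)
  next
    case False
    then obtain w where "w \<in> V" "E u w" "d w v \<le> real n"
      using descent Suc.prems by fastforce
    then obtain p where "walk E p" "hd p = w" "last p = v" "length p \<le> Suc n"
      using Suc.IH Suc.prems by blast
    moreover have "p \<noteq> []" using \<open>walk E p\<close> by (simp add: walk_def)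
    ultimately show ?thesis using \<open>E u w\<close> by (intro exI[of _ "u # p"]) (simp add: walk_Cons)
  qed
qed

lemma graph_dist_eq_if_descent:
  assumes "V \<subseteq> M"
    and edge: "\<And>u v. E u v \<Longrightarrow> u \<in> V \<and> v \<in> V \<and> d u v = 1"
    and descent: "\<And>u v. u \<in> V \<Longrightarrow> v \<in> V \<Longrightarrow> u \<noteq> v \<Longrightarrow> \<exists>w\<in>V. E u w \<and> d w v \<le> d u v - 1"
    and integral: "\<And>u v. u \<in> V \<Longrightarrow> v \<in> V \<Longrightarrow> d u v \<in> \<int>"
    and u: "u \<in> V" and v: "v \<in> V"
  shows "graph_dist E u v = d u v"
proof -
  obtain m where "d u v = of_int m" using integral[OF u v] by (elim Ints_cases)
  then obtain k where k: "d u v = real k" using nonneg[of u v] by (intro that[of "nat m"]) simp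
  have lower: "k \<le> n" if "walk E p" "length p = Suc n" "hd p = u" "last p = v" for p n
    using walk_mdist_le[of E p] edge that u \<open>V \<subseteq> M\<close> k by auto
  obtain p where p: "walk E p" "hd p = u" "last p = v" "length p \<le> Suc k"
    using walk_exists_if_descent[OF descent \<open>V \<subseteq> M\<close> u v] k by auto
  then have "length p = Suc k"
    using lower[of p "length p - 1"] by (cases p) (auto simp: walk_def)
  then have "(LEAST n. \<exists>p. walk E p \<and> length p = Suc n \<and> hd p = u \<and> last p = v) = k"
    using p lower by (intro Least_equality) blast+
  then show ?thesis using k by (simp add: graph_dist_def)
qed

lemma isometry_displacement_le:
  assumes iso: "\<And>x y. x \<in> M \<Longrightarrow> y \<in> M \<Longrightarrow> d (\<psi> x) (\<psi> y) = d x y"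
    and maps: "\<And>x. x \<in> M \<Longrightarrow> \<psi> x \<in> M"
    and "a \<in> M" "z \<in> M"
  shows "d a (\<psi> a) \<le> d z (\<psi> z) + 2 * d a z"
proof -
  have "d a (\<psi> a) \<le> d a z + d z (\<psi> a)"
    using triangle assms maps by blast
  also have "d z (\<psi> a) \<le> d z (\<psi> z) + d (\<psi> z) (\<psi> a)"
    using triangle assms maps by blast
  also have "d (\<psi> z) (\<psi> a) = d a z"
    using iso assms commute by metis
  finally show ?thesis by simp
qed

end

lemma no_cycle_if_unique_lower_neighbour:
  fixes E :: "'v \<Rightarrow> 'v \<Rightarrow> bool" and ht :: "'v \<Rightarrow> real"
  assumes sym: "\<And>u v. E u v \<Longrightarrow> E v u"
    and step: "\<And>u v. E u v \<Longrightarrow> \<bar>ht u - ht v\<bar> = 1"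
    and down: "\<And>u v w. E u v \<Longrightarrow> E u w \<Longrightarrow> ht v = ht u - 1 \<Longrightarrow> ht w = ht u - 1 \<Longrightarrow> v = w"
  shows "\<not> (\<exists>p. walk E p \<and> distinct p \<and> length p \<ge> 3 \<and> E (last p) (hd p))"
proof
  assume "\<exists>p. walk E p \<and> distinct p \<and> length p \<ge> 3 \<and> E (last p) (hd p)"
  then obtain p where w: "walk E p" and d: "distinct p" and l: "length p \<ge> 3"
    and c: "E (last p) (hd p)" by blast
  define n where "n = length p"
  have "p \<noteq> []" using l by auto
  then have ends: "last p = p ! (n - 1)" "hd p = p ! 0"
    by (simp_all add: last_conv_nth hd_conv_nth n_def)
  \<comment> \<open>the cycle neighbours of a highest vertex both lie one level below it, so they coincide\<close>
  obtain j where j: "j < n" and top: "\<And>i. i < n \<Longrightarrow> ht (p ! i) \<le> ht (p ! j)"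
  proof -
    have "Max (ht ` set p) \<in> ht ` set p" using l by (intro Max_in) auto
    then obtain j where "j < n" "ht (p ! j) = Max (ht ` set p)" by (auto simp: in_set_conv_nth n_def)
    then show thesis by (intro that[of j]) (auto simp: n_def)
  qed
  define a where "a = (if j + 1 < n then j + 1 else 0)"
  define b where "b = (if j = 0 then n - 1 else j - 1)"
  have an: "a < n" and bn: "b < n" using j l by (auto simp: a_def b_def n_def)
  have Ea: "E (p ! j) (p ! a)"
  proof (cases "j + 1 < n")
    case True
    then show ?thesis using w by (simp add: a_def walk_def n_def)
  next
    case False
    then have "j = n - 1" using j by simp
    then show ?thesis using c ends False by (simp add: a_def)
  qed
  have Eb: "E (p ! j) (p ! b)"
  proof (cases "j = 0")
    case True
    then show ?thesis using c ends sym by (simp add: b_def)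
  next
    case False
    then have "Suc (j - 1) < n" using j by simp
    then have "E (p ! (j - 1)) (p ! Suc (j - 1))" using w unfolding walk_def n_def by blast
    then show ?thesis using False sym by (simp add: b_def)
  qed
  have "ht (p ! a) = ht (p ! j) - 1" "ht (p ! b) = ht (p ! j) - 1"
    using step[OF Ea] step[OF Eb] top[OF an] top[OF bn] by linarith+
  then have "p ! a = p ! b" using down[OF Ea Eb] by blast
  then have "a = b" using d an bn by (simp add: nth_eq_iff_index_eq n_def)
  then show False using j l by (auto simp: a_def b_def n_def split: if_splits)
qed

lemma Metric_space_inv_image:
  assumes "Metric_space M d" "inj_on f M"
  shows "Metric_space (f ` M) (\<lambda>x y. d (inv_into M f x) (inv_into M f y))"
proof -
  interpret Metric_space M d by fact
  show ?thesis
    by unfold_locales (use assms(2) in \<open>auto simp: commute zero inv_into_f_f intro: triangle\<close>)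
qed

lemma group_actionI:
  assumes G: "group G"
    and ext: "\<And>g. g \<in> carrier G \<Longrightarrow> \<phi> g \<in> extensional E"
    and maps: "\<And>g x. g \<in> carrier G \<Longrightarrow> x \<in> E \<Longrightarrow> \<phi> g x \<in> E"
    and one: "\<And>x. x \<in> E \<Longrightarrow> \<phi> \<one>\<^bsub>G\<^esub> x = x"
    and mult: "\<And>g h x. g \<in> carrier G \<Longrightarrow> h \<in> carrier G \<Longrightarrow> x \<in> E \<Longrightarrow>
                 \<phi> (g \<otimes>\<^bsub>G\<^esub> h) x = \<phi> g (\<phi> h x)"
  shows "group_action G E \<phi>"
proof -
  have bij: "\<phi> g \<in> Bij E" if g: "g \<in> carrier G" for g
  proof -
    have ig: "inv\<^bsub>G\<^esub> g \<in> carrier G" using G g by (simp add: group.inv_closed)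
    have "bij_betw (\<phi> g) E E"
    proof (rule bij_betw_byWitness[where f' = "\<phi> (inv\<^bsub>G\<^esub> g)"])
      show "\<forall>x\<in>E. \<phi> (inv\<^bsub>G\<^esub> g) (\<phi> g x) = x"
        using mult[OF ig g] one group.l_inv[OF G g] by simp
      show "\<forall>x\<in>E. \<phi> g (\<phi> (inv\<^bsub>G\<^esub> g) x) = x"
        using mult[OF g ig] one group.r_inv[OF G g] by simp
    qed (use maps g ig in auto)
    then show ?thesis using ext[OF g] by (simp add: Bij_def)
  qed
  have "\<phi> \<in> hom G (BijGroup E)"
  proof (rule homI)
    fix g h assume g: "g \<in> carrier G" and h: "h \<in> carrier G"
    have "\<phi> (g \<otimes>\<^bsub>G\<^esub> h) = compose E (\<phi> g) (\<phi> h)"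
      using mult[OF g h] ext[OF monoid.m_closed[OF group.is_monoid[OF G] g h]]
      by (auto simp: compose_def extensional_def)
    then show "\<phi> (g \<otimes>\<^bsub>G\<^esub> h) = \<phi> g \<otimes>\<^bsub>BijGroup E\<^esub> \<phi> h"
      using bij[OF g] bij[OF h] by (simp add: BijGroup_def)
  qed (use bij in \<open>simp add: BijGroup_def\<close>)
  then show ?thesis
    unfolding group_action_def group_hom_def group_hom_axioms_def
    using G group_BijGroup by blast
qed

lemma group_action_precompose:
  assumes "group_action G E \<phi>" and "\<sigma> \<in> hom G G"
  shows "group_action G E (\<lambda>g. \<phi> (\<sigma> g))"
proof -
  interpret group_hom G "BijGroup E" \<phi>
    using assms(1) by (simp add: group_action_def)
  have "(\<lambda>g. \<phi> (\<sigma> g)) \<in> hom G (BijGroup E)"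
    using assms(2) by (intro homI) (auto simp: hom_def Pi_def hom_mult intro!: hom_closed)
  then show ?thesis
    unfolding group_action_def group_hom_def group_hom_axioms_def
    using G.group_axioms H.group_axioms by blast
qed

lemma isometric_action_precompose:
  assumes "isometric_action G m \<phi>" and "\<sigma> \<in> hom G G"
  shows "isometric_action G m (\<lambda>g. \<phi> (\<sigma> g))"
  using assms group_action_precompose[of G "mspace m" \<phi> \<sigma>]
  by (auto simp: isometric_action_def hom_def)

lemma cocompact_action_precompose:
  assumes "cocompact_action G m \<phi>" and "\<sigma> ` carrier G = carrier G"
  shows "cocompact_action G m (\<lambda>g. \<phi> (\<sigma> g))"
proof -
  have "(\<Union>g\<in>carrier G. \<phi> (\<sigma> g) ` K) = (\<Union>h\<in>carrier G. \<phi> h ` K)" for K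
    by (subst (2) assms(2)[symmetric]) auto
  then show ?thesis using assms(1) by (simp add: cocompact_action_def)
qed

section \<open>The tree of lamp configurations\<close>

type_synonym tree_point = "real \<times> (int \<Rightarrow> bool)"

definition lamp_tree :: "tree_point set" where
  "lamp_tree = {(h, a). finite {i. a i} \<and> (\<forall>i. a i \<longrightarrow> real_of_int i < h)}"

definition branch_height :: "tree_point \<Rightarrow> tree_point \<Rightarrow> real" where
  "branch_height x y =
     (if snd x = snd y then min (fst x) (fst y)
      else min (min (fst x) (fst y)) (of_int (Min {i. snd x i \<noteq> snd y i})))"

definition tree_dist :: "tree_point \<Rightarrow> tree_point \<Rightarrow> real" where
  "tree_dist x y = fst x + fst y - 2 * branch_height x y"

lemma lamp_tree_finite: "x \<in> lamp_tree \<Longrightarrow> finite {i. snd x i}"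
  by (auto simp: lamp_tree_def)

lemma lamp_tree_lit_below: "x \<in> lamp_tree \<Longrightarrow> snd x i \<Longrightarrow> real_of_int i < fst x"
  by (auto simp: lamp_tree_def)

lemma finite_lamp_difference:
  assumes "x \<in> lamp_tree" "y \<in> lamp_tree"
  shows "finite {i. snd x i \<noteq> snd y i}"
proof -
  have "{i. snd x i \<noteq> snd y i} \<subseteq> {i. snd x i} \<union> {i. snd y i}" by auto
  then show ?thesis using assms lamp_tree_finite finite_subset by blast
qed

lemma le_branch_height_iff:
  assumes "x \<in> lamp_tree" "y \<in> lamp_tree"
  shows "t \<le> branch_height x y \<longleftrightarrow>
    t \<le> fst x \<and> t \<le> fst y \<and> (\<forall>i. real_of_int i < t \<longrightarrow> snd x i = snd y i)"
proof (cases "snd x = snd y")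
  case False
  define D where "D = {i. snd x i \<noteq> snd y i}"
  have D: "finite D" "D \<noteq> {}" using finite_lamp_difference[OF assms] False by (auto simp: D_def)
  have "t \<le> of_int (Min D) \<longleftrightarrow> (\<forall>i \<in> D. t \<le> of_int i)"
    using D by (metis Min_ge_iff of_int_le_iff ceiling_le_iff)
  also have "\<dots> \<longleftrightarrow> (\<forall>i. real_of_int i < t \<longrightarrow> snd x i = snd y i)"
    by (auto simp: D_def not_less[symmetric])
  finally show ?thesis using False by (simp add: branch_height_def D_def)
qed (simp add: branch_height_def)

lemma branch_height_le_fst1: "branch_height x y \<le> fst x"
  unfolding branch_height_def by auto

lemma branch_height_le_fst2: "branch_height x y \<le> fst y"
  unfolding branch_height_def by auto

lemma branch_height_commute: "branch_height x y = branch_height y x"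
  unfolding branch_height_def by (auto simp: eq_commute min.commute)

lemma agree_below_branch_height:
  assumes "x \<in> lamp_tree" "y \<in> lamp_tree" "real_of_int i < branch_height x y"
  shows "snd x i = snd y i"
  using le_branch_height_iff[OF assms(1,2), of "branch_height x y"] assms(3) by blast

lemma branch_height_le_if_differ:
  assumes "x \<in> lamp_tree" "y \<in> lamp_tree" "snd x i \<noteq> snd y i"
  shows "branch_height x y \<le> real_of_int i"
  using agree_below_branch_height[OF assms(1,2)] assms(3) by force

lemma branch_height_ultrametric:
  assumes "x \<in> lamp_tree" "y \<in> lamp_tree" "z \<in> lamp_tree"
  shows "min (branch_height x y) (branch_height y z) \<le> branch_height x z"
  using le_branch_height_iff[OF assms(1,2), of "min (branch_height x y) (branch_height y z)"]
    le_branch_height_iff[OF assms(2,3), of "min (branch_height x y) (branch_height y z)"]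
    le_branch_height_iff[OF assms(1,3), of "min (branch_height x y) (branch_height y z)"]
  by auto

lemma tree_dist_nonneg: "0 \<le> tree_dist x y"
  using branch_height_le_fst1[of x y] branch_height_le_fst2[of x y] by (simp add: tree_dist_def)

lemma tree_dist_commute: "tree_dist x y = tree_dist y x"
  by (simp add: tree_dist_def branch_height_commute)

lemma abs_height_diff_le_tree_dist: "\<bar>fst x - fst y\<bar> \<le> tree_dist x y"
  using branch_height_le_fst1[of x y] branch_height_le_fst2[of x y] by (simp add: tree_dist_def)

lemma tree_dist_self: "tree_dist x x = 0"
  by (simp add: tree_dist_def branch_height_def)

lemma tree_dist_eq_0_imp_eq:
  assumes "x \<in> lamp_tree" "y \<in> lamp_tree" "tree_dist x y = 0"
  shows "x = y"
proof -
  have h: "branch_height x y = fst x" "branch_height x y = fst y"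
    using assms(3) branch_height_le_fst1[of x y] branch_height_le_fst2[of x y]
    by (auto simp: tree_dist_def)
  have "snd x i = snd y i" for i
    using agree_below_branch_height[OF assms(1,2), of i] h
      lamp_tree_lit_below[OF assms(1), of i] lamp_tree_lit_below[OF assms(2), of i]
    by (cases "real_of_int i < fst x") auto
  then show ?thesis using h by (simp add: prod_eq_iff fun_eq_iff)
qed

lemma tree_dist_triangle:
  assumes "x \<in> lamp_tree" "y \<in> lamp_tree" "z \<in> lamp_tree"
  shows "tree_dist x z \<le> tree_dist x y + tree_dist y z"
  using branch_height_ultrametric[OF assms] branch_height_le_fst1[of y z] branch_height_le_fst2[of x y]
  by (simp add: tree_dist_def min_def split: if_splits)

lemma Metric_space_lamp_tree: "Metric_space lamp_tree tree_dist"
proof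
  show "tree_dist x y = 0 \<longleftrightarrow> x = y" if "x \<in> lamp_tree" "y \<in> lamp_tree" for x y
    using tree_dist_eq_0_imp_eq[OF that] tree_dist_self by blast
qed (simp_all add: tree_dist_nonneg tree_dist_commute tree_dist_triangle)

definition truncation :: "(int \<Rightarrow> bool) \<Rightarrow> real \<Rightarrow> tree_point" where
  "truncation a s = (s, \<lambda>i. a i \<and> real_of_int i < s)"

lemma truncation_in_lamp_tree: "finite {i. a i} \<Longrightarrow> truncation a s \<in> lamp_tree"
  by (auto simp: lamp_tree_def truncation_def elim: rev_finite_subset)

lemma fst_truncation [simp]: "fst (truncation a s) = s"
  by (simp add: truncation_def)

lemma truncation_self: "x \<in> lamp_tree \<Longrightarrow> truncation (snd x) (fst x) = x"
  using lamp_tree_lit_below[of x] by (auto simp: truncation_def prod_eq_iff)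

lemma tree_dist_truncation:
  assumes "finite {i. a i}"
  shows "tree_dist (truncation a s) (truncation a t) = \<bar>s - t\<bar>"
proof -
  let ?b = "branch_height (truncation a s) (truncation a t)"
  have "min s t \<le> ?b"
    using le_branch_height_iff[OF truncation_in_lamp_tree[OF assms] truncation_in_lamp_tree[OF assms]]
    by (auto simp: truncation_def)
  moreover have "?b \<le> min s t"
    using branch_height_le_fst1[of "truncation a s"] branch_height_le_fst2[of _ "truncation a t"] by simp
  ultimately have "?b = min s t" by (rule antisym[rotated])
  then show ?thesis by (simp add: tree_dist_def)
qed

lemma branch_height_at_difference:
  assumes "p \<in> lamp_tree" "q \<in> lamp_tree"
    and "branch_height p q < fst p" "branch_height p q < fst q"
  shows "\<exists>i. real_of_int i = branch_height p q \<and> snd p i \<noteq> snd q i"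
proof -
  define D where "D = {i. snd p i \<noteq> snd q i}"
  have "snd p \<noteq> snd q" using assms(3,4) by (auto simp: branch_height_def)
  then have D: "finite D" "D \<noteq> {}" using finite_lamp_difference[OF assms(1,2)] by (auto simp: D_def)
  have "branch_height p q = of_int (Min D)"
    using assms(3,4) \<open>snd p \<noteq> snd q\<close> by (auto simp: branch_height_def D_def)
  moreover have "Min D \<in> D" using D by simp
  ultimately show ?thesis by (auto simp: D_def)
qed

lemma branch_height_truncations:
  assumes p: "p \<in> lamp_tree" and q: "q \<in> lamp_tree"
    and s: "branch_height p q \<le> s" "s \<le> fst p" and t: "branch_height p q \<le> t" "t \<le> fst q"
  shows "branch_height (truncation (snd p) s) (truncation (snd q) t) = branch_height p q"
proof (rule antisym)
  have p': "truncation (snd p) s \<in> lamp_tree" and q': "truncation (snd q) t \<in> lamp_tree"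
    using p q by (simp_all add: lamp_tree_finite truncation_in_lamp_tree)
  show "branch_height p q \<le> branch_height (truncation (snd p) s) (truncation (snd q) t)"
    unfolding le_branch_height_iff[OF p' q']
    using s t agree_below_branch_height[OF p q] by (auto simp: truncation_def)
  show "branch_height (truncation (snd p) s) (truncation (snd q) t) \<le> branch_height p q"
  proof (cases "s = branch_height p q \<or> t = branch_height p q")
    case True
    then show ?thesis
      using branch_height_le_fst1[of "truncation (snd p) s" "truncation (snd q) t"]
        branch_height_le_fst2[of "truncation (snd p) s" "truncation (snd q) t"]
      by auto
  next
    case False
    then have "branch_height p q < s" "branch_height p q < t" using s t by auto
    then obtain i where i: "real_of_int i = branch_height p q" "snd p i \<noteq> snd q i"
      using branch_height_at_difference[OF p q] s t by auto
    then have "snd (truncation (snd p) s) i \<noteq> snd (truncation (snd q) t) i"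
      using \<open>branch_height p q < s\<close> \<open>branch_height p q < t\<close> by (auto simp: truncation_def)
    then show ?thesis using branch_height_le_if_differ[OF p' q'] i(1) by metis
  qed
qed

lemma lamp_tree_geodesic:
  assumes p: "p \<in> lamp_tree" and q: "q \<in> lamp_tree"
  shows "\<exists>c. c 0 = p \<and> c (tree_dist p q) = q \<and> (\<forall>t \<in> {0..tree_dist p q}. c t \<in> lamp_tree) \<and>
     (\<forall>s \<in> {0..tree_dist p q}. \<forall>t \<in> {0..tree_dist p q}. tree_dist (c s) (c t) = \<bar>s - t\<bar>)"
proof -
  define b where "b = branch_height p q"
  define A where "A = fst p - b"
  define c where "c t = (if t \<le> A then truncation (snd p) (fst p - t)
                         else truncation (snd q) (b + (t - A)))" for t
  have fin: "finite {i. snd p i}" "finite {i. snd q i}" using p q lamp_tree_finite by auto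
  have b: "b \<le> fst p" "b \<le> fst q"
    using branch_height_le_fst1 branch_height_le_fst2 by (auto simp: b_def)
  have D: "tree_dist p q = A + (fst q - b)" by (simp add: tree_dist_def A_def b_def)
  have "branch_height (truncation (snd p) b) (truncation (snd q) b) = b"
    using branch_height_truncations[OF p q] b by (simp add: b_def)
  then have "tree_dist (truncation (snd p) b) (truncation (snd q) b) = 0"
    by (simp add: tree_dist_def)
  then have branch: "truncation (snd p) b = truncation (snd q) b"
    using tree_dist_eq_0_imp_eq truncation_in_lamp_tree fin by blast
  have "c 0 = p" using b truncation_self[OF p] by (simp add: c_def A_def)
  moreover have "c (tree_dist p q) = q"
    using D b branch truncation_self[OF q] by (auto simp: c_def A_def)
  moreover have "c t \<in> lamp_tree" for t
    by (simp add: c_def truncation_in_lamp_tree fin)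
  moreover have cross: "tree_dist (c s) (c t) = t - s"
    if "0 \<le> s" "s \<le> A" "A < t" "t \<le> tree_dist p q" for s t
  proof -
    have "branch_height (truncation (snd p) (fst p - s)) (truncation (snd q) (b + (t - A))) = b"
      using branch_height_truncations[OF p q, of "fst p - s" "b + (t - A)"] that D b
      by (simp add: b_def A_def)
    then show ?thesis using that by (simp add: c_def tree_dist_def A_def)
  qed
  moreover have "tree_dist (c s) (c t) = \<bar>s - t\<bar>"
    if "s \<in> {0..tree_dist p q}" "t \<in> {0..tree_dist p q}" for s t
    using cross[of s t] cross[of t s] that tree_dist_commute[of "c s" "c t"]
    by (cases "s \<le> A"; cases "t \<le> A") (auto simp: c_def tree_dist_truncation fin)
  ultimately show ?thesis by blast
qed

section \<open>The lamplighter group acting on the tree\<close>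

definition lamp_act :: "(int \<Rightarrow> bool) \<times> int \<Rightarrow> tree_point \<Rightarrow> tree_point" where
  "lamp_act g x = (fst x + of_int (snd g),
     \<lambda>i. real_of_int i < fst x + of_int (snd g) \<and> (snd x (i - snd g) \<noteq> fst g i))"

lemma fst_lamp_act [simp]: "fst (lamp_act g x) = fst x + of_int (snd g)"
  by (simp add: lamp_act_def)

lemma finite_toggle_shift:
  fixes f g :: "int \<Rightarrow> bool" and n :: int
  assumes "finite {i. f i}" "finite {i. g i}"
  shows "finite {i. f i \<noteq> g (i - n)}"
proof -
  have "{i. f i \<noteq> g (i - n)} \<subseteq> {i. f i} \<union> (\<lambda>j. j + n) ` {j. g j}"
    by auto (metis diff_add_cancel image_eqI mem_Collect_eq)
  then show ?thesis using assms finite_subset by blast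
qed

lemma lamp_act_in_lamp_tree:
  assumes "finite {i. fst g i}" "x \<in> lamp_tree"
  shows "lamp_act g x \<in> lamp_tree"
proof -
  have "{i. snd (lamp_act g x) i} \<subseteq> {i. fst g i \<noteq> snd x (i - snd g)}"
    by (auto simp: lamp_act_def)
  then have "finite {i. snd (lamp_act g x) i}"
    using finite_toggle_shift[OF assms(1) lamp_tree_finite[OF assms(2)]] finite_subset by blast
  then show ?thesis by (auto simp: lamp_tree_def lamp_act_def)
qed

lemma branch_height_lamp_act:
  assumes g: "finite {i. fst g i}" and x: "x \<in> lamp_tree" and y: "y \<in> lamp_tree"
  shows "branch_height (lamp_act g x) (lamp_act g y) = branch_height x y + of_int (snd g)"
proof -
  have gx: "lamp_act g x \<in> lamp_tree" and gy: "lamp_act g y \<in> lamp_tree"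
    using lamp_act_in_lamp_tree g x y by auto
  have shift: "(\<forall>i. P i) \<longleftrightarrow> (\<forall>j. P (j + snd g))" for P by (metis diff_add_cancel)
  have "t \<le> branch_height (lamp_act g x) (lamp_act g y) \<longleftrightarrow> t - of_int (snd g) \<le> branch_height x y" for t
    unfolding le_branch_height_iff[OF gx gy] le_branch_height_iff[OF x y]
    by (subst shift) (auto simp: lamp_act_def algebra_simps)
  then show ?thesis by (metis antisym diff_le_eq order_refl le_diff_eq)
qed

lemma tree_dist_lamp_act:
  "finite {i. fst g i} \<Longrightarrow> x \<in> lamp_tree \<Longrightarrow> y \<in> lamp_tree \<Longrightarrow>
     tree_dist (lamp_act g x) (lamp_act g y) = tree_dist x y"
  by (simp add: tree_dist_def branch_height_lamp_act)

lemma carrier_lamplighter: "g \<in> carrier lamplighter \<longleftrightarrow> finite {i. fst g i}"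
  by (cases g) (simp add: lamplighter_def)

lemma mult_lamplighter:
  "(f, n) \<otimes>\<^bsub>lamplighter\<^esub> (g, m) = ((\<lambda>i. f i \<noteq> g (i - n)), n + m)"
  by (simp add: lamplighter_def)

lemma one_lamplighter: "\<one>\<^bsub>lamplighter\<^esub> = (\<lambda>i. False, 0)"
  by (simp add: lamplighter_def)

lemma group_lamplighter: "group lamplighter"
proof (rule groupI)
  fix x y assume "x \<in> carrier lamplighter" "y \<in> carrier lamplighter"
  then show "x \<otimes>\<^bsub>lamplighter\<^esub> y \<in> carrier lamplighter"
    using finite_toggle_shift by (cases x, cases y) (simp add: mult_lamplighter carrier_lamplighter)
next
  fix x y z
  show "x \<otimes>\<^bsub>lamplighter\<^esub> y \<otimes>\<^bsub>lamplighter\<^esub> z = x \<otimes>\<^bsub>lamplighter\<^esub> (y \<otimes>\<^bsub>lamplighter\<^esub> z)"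
    by (cases x, cases y, cases z) (auto simp: mult_lamplighter algebra_simps)
next
  fix x assume x: "x \<in> carrier lamplighter"
  obtain f n where xe: "x = (f, n)" by (cases x)
  have "{i. f (i + n)} = (\<lambda>j. j - n) ` {i. f i}" by force
  then have "(\<lambda>i. f (i + n), - n) \<in> carrier lamplighter"
    using x xe by (simp add: carrier_lamplighter)
  moreover have "(\<lambda>i. f (i + n), - n) \<otimes>\<^bsub>lamplighter\<^esub> x = \<one>\<^bsub>lamplighter\<^esub>"
    by (simp add: xe mult_lamplighter one_lamplighter)
  ultimately show "\<exists>y\<in>carrier lamplighter. y \<otimes>\<^bsub>lamplighter\<^esub> x = \<one>\<^bsub>lamplighter\<^esub>" by blast
qed (auto simp: one_lamplighter carrier_lamplighter mult_lamplighter)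

lemma lamp_act_mult: "lamp_act (g \<otimes>\<^bsub>lamplighter\<^esub> h) x = lamp_act g (lamp_act h x)"
proof -
  obtain f n k m where g: "g = (f, n)" and h: "h = (k, m)" by (cases g, cases h)
  show ?thesis
    unfolding g h by (auto simp: mult_lamplighter lamp_act_def prod_eq_iff fun_eq_iff algebra_simps)
qed

lemma lamp_act_one: "x \<in> lamp_tree \<Longrightarrow> lamp_act \<one>\<^bsub>lamplighter\<^esub> x = x"
  using lamp_tree_lit_below[of x] by (auto simp: one_lamplighter lamp_act_def prod_eq_iff)

lemma lamp_act_empty_truncation:
  "lamp_act (a, n) (truncation (\<lambda>i. False) s) = truncation a (s + of_int n)"
  by (auto simp: lamp_act_def truncation_def)

definition lamp_reflect :: "(int \<Rightarrow> bool) \<times> int \<Rightarrow> (int \<Rightarrow> bool) \<times> int" where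
  "lamp_reflect g = (\<lambda>i. fst g (- i), - snd g)"

lemma lamp_reflect_carrier:
  assumes "g \<in> carrier lamplighter"
  shows "lamp_reflect g \<in> carrier lamplighter"
proof -
  have "{i. fst g (- i)} = uminus ` {i. fst g i}" by force
  then show ?thesis using assms by (simp add: carrier_lamplighter lamp_reflect_def)
qed

lemma lamp_reflect_mult:
  "lamp_reflect (g \<otimes>\<^bsub>lamplighter\<^esub> h) = lamp_reflect g \<otimes>\<^bsub>lamplighter\<^esub> lamp_reflect h"
proof -
  obtain f n k m where "g = (f, n)" "h = (k, m)" by (cases g, cases h)
  moreover have "\<And>i. - i - n = - n - i" by simp
  ultimately show ?thesis by (simp add: mult_lamplighter lamp_reflect_def)
qed

lemma lamp_reflect_hom: "lamp_reflect \<in> hom lamplighter lamplighter"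
  by (intro homI lamp_reflect_carrier lamp_reflect_mult)

lemma lamp_reflect_image: "lamp_reflect ` carrier lamplighter = carrier lamplighter"
proof -
  have "lamp_reflect (lamp_reflect g) = g" for g by (simp add: lamp_reflect_def)
  then show ?thesis using lamp_reflect_carrier by (metis image_subsetI subset_antisym image_eqI subsetI)
qed

section \<open>An isometric copy of the tree in the real line\<close>

definition real_code :: "'b set \<Rightarrow> real \<times> 'b \<Rightarrow> real" where
  "real_code C p = 4 * real (to_nat_on C (snd p)) + arctan (fst p)"

lemma inj_on_real_code:
  assumes "countable C"
  shows "inj_on (real_code C) (UNIV \<times> C)"
proof
  fix x y assume x: "x \<in> UNIV \<times> C" and y: "y \<in> UNIV \<times> C" and "real_code C x = real_code C y"
  define k where "k = to_nat_on C (snd x)"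
  define l where "l = to_nat_on C (snd y)"
  have eq: "4 * real k + arctan (fst x) = 4 * real l + arctan (fst y)"
    using \<open>real_code C x = real_code C y\<close> by (simp add: real_code_def k_def l_def)
  have "\<bar>arctan (fst x)\<bar> < 2" "\<bar>arctan (fst y)\<bar> < 2"
    using arctan_bounded[of "fst x"] arctan_bounded[of "fst y"] pi_less_4 by auto
  then have "real k < real l + 1" "real l < real k + 1"
    using eq by linarith+
  then have "k = l" by linarith
  then have "fst x = fst y" using eq by (simp add: arctan_eq_iff)
  moreover have "snd x = snd y"
    using inj_onD[OF inj_on_to_nat_on[OF assms] \<open>k = l\<close>[unfolded k_def l_def]] x y by auto
  ultimately show "x = y" by (simp add: prod_eq_iff)
qed

lemma countable_finite_predicates: "countable {a :: 'a::countable \<Rightarrow> bool. finite {i. a i}}"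
proof (rule countable_image_inj_on)
  show "countable ((\<lambda>a. {i. a i}) ` {a :: 'a \<Rightarrow> bool. finite {i. a i}})"
    by (rule countable_subset[OF _ countable_Collect_finite]) auto
qed (auto simp: inj_on_def fun_eq_iff)

definition encode :: "tree_point \<Rightarrow> real" where
  "encode = real_code {a. finite {i. a i}}"

abbreviation decode :: "real \<Rightarrow> tree_point" where
  "decode \<equiv> inv_into lamp_tree encode"

definition coded_tree :: "real set" where
  "coded_tree = encode ` lamp_tree"

definition coded_tree_dist :: "real \<Rightarrow> real \<Rightarrow> real" where
  "coded_tree_dist x y = tree_dist (decode x) (decode y)"

definition coded_tree_metric :: "real metric" where
  "coded_tree_metric = metric (coded_tree, coded_tree_dist)"

lemma inj_on_encode: "inj_on encode lamp_tree"
  unfolding encode_def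
  by (rule inj_on_subset[OF inj_on_real_code[OF countable_finite_predicates]])
    (auto simp: lamp_tree_def)

lemma decode_encode [simp]: "p \<in> lamp_tree \<Longrightarrow> decode (encode p) = p"
  by (rule inv_into_f_f[OF inj_on_encode])

lemma Metric_space_coded_tree: "Metric_space coded_tree coded_tree_dist"
  unfolding coded_tree_def coded_tree_dist_def
  by (rule Metric_space_inv_image[OF Metric_space_lamp_tree inj_on_encode])

interpretation coded_tree: Metric_space coded_tree coded_tree_dist
  by (rule Metric_space_coded_tree)

lemma mspace_coded_tree_metric [simp]: "mspace coded_tree_metric = coded_tree"
  by (simp add: coded_tree_metric_def coded_tree.mspace_metric)

lemma mdist_coded_tree_metric [simp]: "mdist coded_tree_metric = coded_tree_dist"
  by (simp add: coded_tree_metric_def coded_tree.mdist_metric)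

lemma encode_in_coded_tree: "p \<in> lamp_tree \<Longrightarrow> encode p \<in> coded_tree"
  by (simp add: coded_tree_def)

lemma coded_tree_dist_encode [simp]:
  "p \<in> lamp_tree \<Longrightarrow> q \<in> lamp_tree \<Longrightarrow> coded_tree_dist (encode p) (encode q) = tree_dist p q"
  by (simp add: coded_tree_dist_def)

lemma coded_treeE:
  assumes "x \<in> coded_tree"
  obtains p where "p \<in> lamp_tree" "x = encode p"
  using assms by (auto simp: coded_tree_def)

lemma compactin_vertical_segment:
  assumes "finite {i. a i}"
  shows "compactin (mtopology_of coded_tree_metric) ((\<lambda>s. encode (truncation a s)) ` {lo..hi})"
proof -
  have "Lipschitz_continuous_map euclidean_metric coded_tree_metric (\<lambda>s. encode (truncation a s))"
    unfolding Lipschitz_continuous_map_def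
    by (auto intro!: exI[of _ 1] simp: truncation_in_lamp_tree encode_in_coded_tree
          tree_dist_truncation dist_real_def assms)
  then have "continuous_map euclideanreal (mtopology_of coded_tree_metric) (\<lambda>s. encode (truncation a s))"
    using Lipschitz_continuous_imp_continuous_map by fastforce
  then show ?thesis by (rule image_compactin[rotated]) simp
qed

lemma finite_functions_agreeing_outside:
  assumes "finite I"
  shows "finite {b :: 'a \<Rightarrow> bool. \<forall>i. i \<notin> I \<longrightarrow> b i = c i}"
proof -
  have "{b. \<forall>i. i \<notin> I \<longrightarrow> b i = c i} \<subseteq> (\<lambda>S i. if i \<in> I then i \<in> S else c i) ` Pow I"
  proof
    fix b assume "b \<in> {b. \<forall>i. i \<notin> I \<longrightarrow> b i = c i}"
    then have "b = (\<lambda>i. if i \<in> I then i \<in> {j \<in> I. b j} else c i)" by (auto simp: fun_eq_iff)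
    then show "b \<in> (\<lambda>S i. if i \<in> I then i \<in> S else c i) ` Pow I" by blast
  qed
  then show ?thesis using assms finite_subset by blast
qed

lemma finite_int_interval: "finite {i :: int. lo \<le> real_of_int i \<and> real_of_int i \<le> hi}"
  by (rule finite_subset[of _ "{\<lfloor>lo\<rfloor> .. \<lceil>hi\<rceil>}"]) (auto simp: floor_le_iff le_ceiling_iff)

lemma tree_dist_le_bounds:
  assumes p: "p \<in> lamp_tree" and q: "q \<in> lamp_tree" and d: "tree_dist p q \<le> r"
  shows "fst q \<in> {fst p - r .. fst p + r}"
    and "\<And>i. snd q i \<noteq> snd p i \<Longrightarrow> fst p - r \<le> real_of_int i \<and> real_of_int i \<le> fst p + r"
proof -
  show fq: "fst q \<in> {fst p - r .. fst p + r}"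
    using abs_height_diff_le_tree_dist[of p q] d by auto
  fix i assume i: "snd q i \<noteq> snd p i"
  have "branch_height p q \<ge> fst p - r" using d fq by (simp add: tree_dist_def)
  then have "fst p - r \<le> real_of_int i"
    using agree_below_branch_height[OF p q, of i] i by force
  moreover have "real_of_int i < max (fst p) (fst q)"
    using i lamp_tree_lit_below[OF p, of i] lamp_tree_lit_below[OF q, of i] by auto
  ultimately show "fst p - r \<le> real_of_int i \<and> real_of_int i \<le> fst p + r"
    using fq tree_dist_nonneg[of p q] d by auto
qed

lemma proper_coded_tree_metric: "proper_metric coded_tree_metric"
  unfolding proper_metric_def
proof (intro ballI allI)
  fix x r assume "x \<in> mspace coded_tree_metric"
  then obtain p where p: "p \<in> lamp_tree" "x = encode p" by (auto elim: coded_treeE)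
  define I where "I = {i :: int. fst p - r \<le> real_of_int i \<and> real_of_int i \<le> fst p + r}"
  define B where "B = {b. finite {i. b i} \<and> (\<forall>i. i \<notin> I \<longrightarrow> b i = snd p i)}"
  define K where "K = (\<Union>b\<in>B. (\<lambda>s. encode (truncation b s)) ` {fst p - r .. fst p + r})"
  have "finite B"
    using finite_functions_agreeing_outside[OF finite_int_interval, of _ _ "snd p"]
    by (auto simp: B_def I_def elim: rev_finite_subset)
  then have "compactin (mtopology_of coded_tree_metric) K"
    unfolding K_def by (intro compactin_Union) (auto simp: B_def compactin_vertical_segment)
  moreover have "mcball_of coded_tree_metric x r \<subseteq> K"
  proof
    fix y assume "y \<in> mcball_of coded_tree_metric x r"
    then obtain q where q: "q \<in> lamp_tree" "y = encode q" and d: "tree_dist p q \<le> r"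
      using p by (auto elim: coded_treeE)
    have "snd q \<in> B"
      using tree_dist_le_bounds(2)[OF p(1) q(1) d] lamp_tree_finite[OF q(1)]
      by (auto simp: B_def I_def)
    moreover have "y = encode (truncation (snd q) (fst q))"
      using q truncation_self by simp
    ultimately show "y \<in> K"
      using tree_dist_le_bounds(1)[OF p(1) q(1) d] unfolding K_def by blast
  qed
  moreover have "closedin (mtopology_of coded_tree_metric) (mcball_of coded_tree_metric x r)"
    unfolding mtopology_of_def mcball_of_def
    by (rule Metric_space.closedin_mcball[OF Metric_space_mspace_mdist])
  ultimately show "compactin (mtopology_of coded_tree_metric) (mcball_of coded_tree_metric x r)"
    by (rule closed_compactin)
qed

lemma unbounded_coded_tree_metric: "unbounded_metric coded_tree_metric"
  unfolding unbounded_metric_def mspace_coded_tree_metric mdist_coded_tree_metric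
proof
  have line: "truncation (\<lambda>i. False) t \<in> lamp_tree" for t
    by (rule truncation_in_lamp_tree) simp
  assume "coded_tree.mbounded coded_tree"
  then obtain x B where "x \<in> coded_tree" and B: "\<And>y. y \<in> coded_tree \<Longrightarrow> coded_tree_dist x y \<le> B"
    using encode_in_coded_tree[OF line] by (auto simp: coded_tree.mbounded)
  then obtain p where p: "p \<in> lamp_tree" "x = encode p" by (auto elim: coded_treeE)
  let ?q = "truncation (\<lambda>i. False) (fst p + \<bar>B\<bar> + 1)"
  have "tree_dist p ?q \<le> B"
    using B[OF encode_in_coded_tree[OF line]] p line by simp
  then have "\<bar>B\<bar> + 1 \<le> B"
    using abs_height_diff_le_tree_dist[of p ?q] by simp
  then show False by linarith
qed

lemma geodesic_coded_tree_metric: "geodesic_metric coded_tree_metric"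
  unfolding geodesic_metric_def mspace_coded_tree_metric mdist_coded_tree_metric
proof (intro ballI)
  fix x y assume "x \<in> coded_tree" "y \<in> coded_tree"
  then obtain p q where p: "p \<in> lamp_tree" "x = encode p" and q: "q \<in> lamp_tree" "y = encode q"
    by (auto elim!: coded_treeE)
  obtain c where "c 0 = p" "c (tree_dist p q) = q" "\<forall>t \<in> {0..tree_dist p q}. c t \<in> lamp_tree"
    "\<forall>s \<in> {0..tree_dist p q}. \<forall>t \<in> {0..tree_dist p q}. tree_dist (c s) (c t) = \<bar>s - t\<bar>"
    using lamp_tree_geodesic[OF p(1) q(1)] by blast
  then show "\<exists>\<gamma>. \<gamma> 0 = x \<and> \<gamma> (coded_tree_dist x y) = y \<and>
        (\<forall>t\<in>{0..coded_tree_dist x y}. \<gamma> t \<in> coded_tree) \<and>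
        (\<forall>s\<in>{0..coded_tree_dist x y}. \<forall>t\<in>{0..coded_tree_dist x y}.
           coded_tree_dist (\<gamma> s) (\<gamma> t) = \<bar>s - t\<bar>)"
    using p q by (intro exI[of _ "\<lambda>t. encode (c t)"]) (auto simp: encode_in_coded_tree)
qed

section \<open>The simplicial tree of points of integer height\<close>

lemma Ints_less_imp_le_diff_1:
  fixes a b :: "'a::linordered_idom"
  assumes "a \<in> \<int>" "b \<in> \<int>" "a < b"
  shows "a \<le> b - 1"
proof -
  obtain m k where mk: "a = of_int m" "b = of_int k" using assms(1,2) by (auto elim!: Ints_cases)
  then have "m + 1 \<le> k" using assms(3) by simp
  then have "of_int (m + 1) \<le> (of_int k :: 'a)" by (simp only: of_int_le_iff)
  then show ?thesis using mk by (simp add: le_diff_eq)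
qed

lemma branch_height_Ints: "fst p \<in> \<int> \<Longrightarrow> fst q \<in> \<int> \<Longrightarrow> branch_height p q \<in> \<int>"
  unfolding branch_height_def by (auto simp: min_def)

lemma lamp_tree_descent:
  assumes p: "p \<in> lamp_tree" "fst p \<in> \<int>" and q: "q \<in> lamp_tree" "fst q \<in> \<int>" and "p \<noteq> q"
  shows "\<exists>w. w \<in> lamp_tree \<and> fst w \<in> \<int> \<and> tree_dist p w = 1 \<and> tree_dist w q \<le> tree_dist p q - 1"
proof (cases "branch_height p q < fst p")
  case True
  \<comment> \<open>step down from p towards the branch point\<close>
  define w where "w = truncation (snd p) (fst p - 1)"
  have w: "w \<in> lamp_tree" "fst w \<in> \<int>"
    using p by (auto simp: w_def truncation_in_lamp_tree lamp_tree_finite)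
  have "tree_dist p w = 1"
    using tree_dist_truncation[OF lamp_tree_finite[OF p(1)], of "fst p" "fst p - 1"] truncation_self[OF p(1)]
    by (simp add: w_def)
  moreover have "branch_height p w = fst p - 1"
    using \<open>tree_dist p w = 1\<close> by (simp add: tree_dist_def w_def)
  then have "branch_height p q \<le> branch_height w q"
    using branch_height_ultrametric[OF w(1) p(1) q(1)] branch_height_commute[of p w]
      Ints_less_imp_le_diff_1[OF branch_height_Ints[OF p(2) q(2)] p(2) True] by linarith
  then have "tree_dist w q \<le> tree_dist p q - 1" by (simp add: tree_dist_def w_def)
  ultimately show ?thesis using w by blast
next
  case False
  \<comment> \<open>p is an ancestor of q: step up from p towards q\<close>
  then have b: "branch_height p q = fst p" using branch_height_le_fst1[of p q] by simp
  have "fst p \<noteq> fst q"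
    using b tree_dist_eq_0_imp_eq[OF p(1) q(1)] \<open>p \<noteq> q\<close> by (auto simp: tree_dist_def)
  then have le: "fst p + 1 \<le> fst q"
    using Ints_less_imp_le_diff_1[OF p(2) q(2)] branch_height_le_fst2[of p q] b by simp
  define w where "w = truncation (snd q) (fst p + 1)"
  have w: "w \<in> lamp_tree" "fst w \<in> \<int>"
    using q p by (auto simp: w_def truncation_in_lamp_tree lamp_tree_finite)
  have "tree_dist w q = fst q - fst p - 1"
    using tree_dist_truncation[OF lamp_tree_finite[OF q(1)], of "fst p + 1" "fst q"]
      truncation_self[OF q(1)] le by (simp add: w_def)
  moreover have "tree_dist p w = 1"
  proof -
    have "branch_height q w = fst p + 1"
      using \<open>tree_dist w q = fst q - fst p - 1\<close> tree_dist_commute[of w q]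
      by (simp add: tree_dist_def w_def)
    then have "fst p \<le> branch_height p w"
      using branch_height_ultrametric[OF p(1) q(1) w(1)] b by simp
    then show ?thesis
      using abs_height_diff_le_tree_dist[of p w] by (simp add: tree_dist_def w_def)
  qed
  ultimately show ?thesis using w b by (intro exI[of _ w]) (simp add: tree_dist_def)
qed

lemma lamp_tree_edge_heights:
  assumes p: "p \<in> lamp_tree" "fst p \<in> \<int>" and q: "q \<in> lamp_tree" "fst q \<in> \<int>"
    and d: "tree_dist p q = 1"
  shows "\<bar>fst p - fst q\<bar> = 1"
proof -
  have "fst p \<noteq> fst q"
  proof
    assume "fst p = fst q"
    then have "2 * (fst p - branch_height p q) = 1" using d by (simp add: tree_dist_def)
    moreover have "fst p - branch_height p q \<in> \<int>"
      using branch_height_Ints[OF p(2) q(2)] p(2) by simp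
    then obtain m where "fst p - branch_height p q = of_int m" by (elim Ints_cases)
    ultimately have "real_of_int (2 * m) = 1" by simp
    then have "2 * m = 1" by (simp only: of_int_eq_1_iff)
    then show False by presburger
  qed
  then show ?thesis
    using abs_height_diff_le_tree_dist[of p q] d Ints_less_imp_le_diff_1[OF p(2) q(2)]
      Ints_less_imp_le_diff_1[OF q(2) p(2)] by linarith
qed

lemma lamp_tree_unique_lower_neighbour:
  assumes "p \<in> lamp_tree" "q \<in> lamp_tree" "r \<in> lamp_tree"
    and "tree_dist p q = 1" "tree_dist p r = 1" "fst q = fst p - 1" "fst r = fst p - 1"
  shows "q = r"
proof -
  have "branch_height q p = fst p - 1" "branch_height p r = fst p - 1"
    using assms(4-7) branch_height_commute[of p q] by (auto simp: tree_dist_def)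
  then have "fst p - 1 \<le> branch_height q r"
    using branch_height_ultrametric[OF assms(2,1,3)] by simp
  then have "tree_dist q r \<le> 0" using assms(6,7) by (simp add: tree_dist_def)
  then show ?thesis using tree_dist_nonneg[of q r] tree_dist_eq_0_imp_eq[OF assms(2,3)] by simp
qed

definition tree_vertices :: "real set" where
  "tree_vertices = encode ` {p \<in> lamp_tree. fst p \<in> \<int>}"

definition tree_edge :: "real \<Rightarrow> real \<Rightarrow> bool" where
  "tree_edge x y \<longleftrightarrow> x \<in> tree_vertices \<and> y \<in> tree_vertices \<and> coded_tree_dist x y = 1"

lemma tree_verticesE:
  assumes "x \<in> tree_vertices"
  obtains p where "p \<in> lamp_tree" "fst p \<in> \<int>" "x = encode p"
  using assms by (auto simp: tree_vertices_def)

lemma tree_vertices_subset: "tree_vertices \<subseteq> coded_tree"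
  by (auto simp: tree_vertices_def coded_tree_def)

lemma tree_edge_descent:
  assumes "u \<in> tree_vertices" "v \<in> tree_vertices" "u \<noteq> v"
  shows "\<exists>w\<in>tree_vertices. tree_edge u w \<and> coded_tree_dist w v \<le> coded_tree_dist u v - 1"
proof -
  obtain p q where p: "p \<in> lamp_tree" "fst p \<in> \<int>" "u = encode p"
    and q: "q \<in> lamp_tree" "fst q \<in> \<int>" "v = encode q"
    using assms(1,2) by (auto elim!: tree_verticesE)
  then obtain w where "w \<in> lamp_tree" "fst w \<in> \<int>" "tree_dist p w = 1" "tree_dist w q \<le> tree_dist p q - 1"
    using lamp_tree_descent assms(3) by blast
  then show ?thesis
    using p q assms(1) by (intro bexI[of _ "encode w"]) (auto simp: tree_edge_def tree_vertices_def)
qed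

lemma graph_dist_tree_edge:
  assumes "u \<in> tree_vertices" "v \<in> tree_vertices"
  shows "graph_dist tree_edge u v = coded_tree_dist u v"
proof (rule coded_tree.graph_dist_eq_if_descent[OF tree_vertices_subset _ tree_edge_descent _ assms])
  fix x y assume "x \<in> tree_vertices" "y \<in> tree_vertices"
  then obtain p q where "p \<in> lamp_tree" "fst p \<in> \<int>" "x = encode p"
    and "q \<in> lamp_tree" "fst q \<in> \<int>" "y = encode q"
    by (auto elim!: tree_verticesE)
  then show "coded_tree_dist x y \<in> \<int>"
    using branch_height_Ints[of p q] by (simp add: tree_dist_def)
qed (auto simp: tree_edge_def)

lemma simplicial_tree_tree_vertices: "simplicial_tree tree_vertices tree_edge"
  unfolding simplicial_tree_def
proof (intro conjI)
  have "encode (truncation (\<lambda>i. False) 0) \<in> tree_vertices"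
    by (auto simp: tree_vertices_def truncation_in_lamp_tree)
  then show "tree_vertices \<noteq> {}" by blast
  show "\<forall>u v. tree_edge u v \<longrightarrow> u \<in> tree_vertices \<and> v \<in> tree_vertices \<and> u \<noteq> v \<and> tree_edge v u"
    using tree_vertices_subset by (auto simp: tree_edge_def coded_tree.commute)
  show "\<forall>u\<in>tree_vertices. \<forall>v\<in>tree_vertices. \<exists>p. walk tree_edge p \<and> hd p = u \<and> last p = v"
  proof (intro ballI)
    fix u v assume "u \<in> tree_vertices" "v \<in> tree_vertices"
    then show "\<exists>p. walk tree_edge p \<and> hd p = u \<and> last p = v"
      using coded_tree.walk_exists_if_descent[OF tree_edge_descent tree_vertices_subset,
          of u v "nat \<lceil>coded_tree_dist u v\<rceil>"] real_nat_ceiling_ge by blast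
  qed
  show "\<not> (\<exists>p. walk tree_edge p \<and> distinct p \<and> length p \<ge> 3 \<and> tree_edge (last p) (hd p))"
  proof (rule no_cycle_if_unique_lower_neighbour[where ht = "\<lambda>x. fst (decode x)"])
    show "tree_edge v u" if "tree_edge u v" for u v
      using that tree_vertices_subset by (auto simp: tree_edge_def coded_tree.commute)
    show "\<bar>fst (decode u) - fst (decode v)\<bar> = 1" if "tree_edge u v" for u v
      using that lamp_tree_edge_heights by (auto simp: tree_edge_def elim!: tree_verticesE)
    show "v = w"
      if "tree_edge u v" "tree_edge u w" "fst (decode v) = fst (decode u) - 1"
        "fst (decode w) = fst (decode u) - 1" for u v w
    proof -
      have "u \<in> tree_vertices" "v \<in> tree_vertices" "w \<in> tree_vertices"
        using that(1,2) by (simp_all add: tree_edge_def)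
      then obtain p q r where p: "p \<in> lamp_tree" "u = encode p" and q: "q \<in> lamp_tree" "v = encode q"
        and r: "r \<in> lamp_tree" "w = encode r"
        by (metis tree_verticesE)
      with that have "q = r"
        by (intro lamp_tree_unique_lower_neighbour[of p]) (auto simp: tree_edge_def)
      with q r show "v = w" by simp
    qed
  qed
qed

lemma tree_dist_truncation_ceiling:
  "p \<in> lamp_tree \<Longrightarrow> tree_dist p (truncation (snd p) (of_int \<lceil>fst p\<rceil>)) \<le> 1"
  using tree_dist_truncation[OF lamp_tree_finite, of p "fst p" "of_int \<lceil>fst p\<rceil>"] truncation_self[of p]
  by simp linarith

lemma quasi_isometric_tree_vertices:
  "quasi_isometric coded_tree coded_tree_dist tree_vertices (graph_dist tree_edge)"
  unfolding quasi_isometric_def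
proof (intro exI conjI)
  define up :: "tree_point \<Rightarrow> tree_point" where "up p = truncation (snd p) (of_int \<lceil>fst p\<rceil>)" for p
  define f where "f x = encode (up (decode x))" for x
  have up: "up p \<in> lamp_tree" "fst (up p) \<in> \<int>" "tree_dist p (up p) \<le> 1"
    if "p \<in> lamp_tree" for p
    using that tree_dist_truncation_ceiling by (auto simp: up_def truncation_in_lamp_tree lamp_tree_finite)
  have f: "f x \<in> tree_vertices" "decode (f x) = up (decode x)" if "x \<in> coded_tree" for x
    using that up by (auto simp: f_def tree_vertices_def elim!: coded_treeE)
  show "f ` coded_tree \<subseteq> tree_vertices" using f by blast
  show "\<forall>x\<in>coded_tree. \<forall>y\<in>coded_tree. coded_tree_dist x y / 1 - 2 \<le> graph_dist tree_edge (f x) (f y) \<and>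
          graph_dist tree_edge (f x) (f y) \<le> 1 * coded_tree_dist x y + 2"
  proof (intro ballI)
    fix x y assume x: "x \<in> coded_tree" and y: "y \<in> coded_tree"
    have fx: "f x \<in> coded_tree" and fy: "f y \<in> coded_tree"
      using f x y tree_vertices_subset by auto
    have "coded_tree_dist x (f x) \<le> 1" "coded_tree_dist y (f y) \<le> 1"
      using x y f up by (auto simp: coded_tree_dist_def elim!: coded_treeE)
    moreover have "coded_tree_dist (f x) (f y) \<le> coded_tree_dist (f x) x + coded_tree_dist x (f y)"
      "coded_tree_dist x (f y) \<le> coded_tree_dist x y + coded_tree_dist y (f y)"
      "coded_tree_dist x y \<le> coded_tree_dist x (f x) + coded_tree_dist (f x) y"
      "coded_tree_dist (f x) y \<le> coded_tree_dist (f x) (f y) + coded_tree_dist (f y) y"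
      using coded_tree.triangle x y fx fy by blast+
    moreover have "graph_dist tree_edge (f x) (f y) = coded_tree_dist (f x) (f y)"
      using graph_dist_tree_edge f x y by blast
    ultimately show "coded_tree_dist x y / 1 - 2 \<le> graph_dist tree_edge (f x) (f y) \<and>
        graph_dist tree_edge (f x) (f y) \<le> 1 * coded_tree_dist x y + 2"
      using coded_tree.commute[of x "f x"] coded_tree.commute[of y "f y"] by simp
  qed
  show "\<forall>z\<in>tree_vertices. \<exists>x\<in>coded_tree. graph_dist tree_edge z (f x) \<le> 2"
  proof
    fix z assume z: "z \<in> tree_vertices"
    then obtain p where p: "p \<in> lamp_tree" "fst p \<in> \<int>" "z = encode p" by (rule tree_verticesE)
    then have "of_int \<lceil>fst p\<rceil> = fst p" by (elim Ints_cases) simp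
    then have "f z = z" using p by (simp add: f_def up_def truncation_self)
    then show "\<exists>x\<in>coded_tree. graph_dist tree_edge z (f x) \<le> 2"
      using z graph_dist_tree_edge[OF z z] tree_vertices_subset by force
  qed
qed simp_all

lemma quasi_tree_coded_tree_metric: "quasi_tree coded_tree_metric"
  unfolding quasi_tree_def
  using geodesic_coded_tree_metric simplicial_tree_tree_vertices quasi_isometric_tree_vertices by auto

section \<open>The two proper cocompact actions\<close>

definition coded_tree_action :: "(int \<Rightarrow> bool) \<times> int \<Rightarrow> real \<Rightarrow> real" where
  "coded_tree_action g = (\<lambda>x\<in>coded_tree. encode (lamp_act g (decode x)))"

lemma coded_tree_action_encode:
  "p \<in> lamp_tree \<Longrightarrow> coded_tree_action g (encode p) = encode (lamp_act g p)"
  by (simp add: coded_tree_action_def encode_in_coded_tree)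

lemma coded_tree_action_in_coded_tree:
  "g \<in> carrier lamplighter \<Longrightarrow> x \<in> coded_tree \<Longrightarrow> coded_tree_action g x \<in> coded_tree"
  by (auto simp: coded_tree_action_encode carrier_lamplighter lamp_act_in_lamp_tree encode_in_coded_tree
      elim!: coded_treeE)

lemma isometric_action_coded_tree_action:
  "isometric_action lamplighter coded_tree_metric coded_tree_action"
  unfolding isometric_action_def mspace_coded_tree_metric mdist_coded_tree_metric
proof (intro conjI ballI)
  show "group_action lamplighter coded_tree coded_tree_action"
  proof (rule group_actionI[OF group_lamplighter])
    show "coded_tree_action \<one>\<^bsub>lamplighter\<^esub> x = x" if "x \<in> coded_tree" for x
      using that by (auto simp: coded_tree_action_encode lamp_act_one elim!: coded_treeE)
    show "coded_tree_action (g \<otimes>\<^bsub>lamplighter\<^esub> h) x = coded_tree_action g (coded_tree_action h x)"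
      if "g \<in> carrier lamplighter" "h \<in> carrier lamplighter" "x \<in> coded_tree" for g h x
      using that by (auto simp: coded_tree_action_encode lamp_act_mult lamp_act_in_lamp_tree
          carrier_lamplighter elim!: coded_treeE)
    show "coded_tree_action g \<in> extensional coded_tree" for g
      by (simp add: coded_tree_action_def)
  qed (rule coded_tree_action_in_coded_tree)
  show "coded_tree_dist (coded_tree_action g x) (coded_tree_action g y) = coded_tree_dist x y"
    if "g \<in> carrier lamplighter" "x \<in> coded_tree" "y \<in> coded_tree" for g x y
    using that by (auto simp: coded_tree_action_encode tree_dist_lamp_act lamp_act_in_lamp_tree
        carrier_lamplighter elim!: coded_treeE)
qed

lemma cocompact_action_coded_tree_action:
  "cocompact_action lamplighter coded_tree_metric coded_tree_action"
  unfolding cocompact_action_def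
proof (intro exI conjI)
  let ?K = "(\<lambda>s. encode (truncation (\<lambda>i. False) s)) ` {-1..0}"
  show "compactin (mtopology_of coded_tree_metric) ?K" by (rule compactin_vertical_segment) simp
  have K: "?K \<subseteq> coded_tree" by (auto simp: encode_in_coded_tree truncation_in_lamp_tree)
  have "x \<in> (\<Union>g\<in>carrier lamplighter. coded_tree_action g ` ?K)" if "x \<in> coded_tree" for x
  proof -
    obtain p where p: "p \<in> lamp_tree" "x = encode p" using \<open>x \<in> coded_tree\<close> by (rule coded_treeE)
    define s where "s = fst p - of_int \<lceil>fst p\<rceil>"
    have "s \<in> {-1..0}" unfolding s_def by (simp add: algebra_simps) linarith
    moreover have "(snd p, \<lceil>fst p\<rceil>) \<in> carrier lamplighter"
      using p lamp_tree_finite by (simp add: carrier_lamplighter)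
    moreover have "coded_tree_action (snd p, \<lceil>fst p\<rceil>) (encode (truncation (\<lambda>i. False) s)) = x"
      using p by (simp add: coded_tree_action_encode truncation_in_lamp_tree lamp_act_empty_truncation
          s_def truncation_self)
    ultimately show ?thesis by blast
  qed
  then show "(\<Union>g\<in>carrier lamplighter. coded_tree_action g ` ?K) = mspace coded_tree_metric"
    using K coded_tree_action_in_coded_tree by auto
qed

definition tree_origin :: tree_point where
  "tree_origin = truncation (\<lambda>i. False) 0"

lemma tree_origin_in_lamp_tree: "tree_origin \<in> lamp_tree"
  by (simp add: tree_origin_def truncation_in_lamp_tree)

lemma lamp_act_tree_origin: "lamp_act g tree_origin = truncation (fst g) (of_int (snd g))"
  by (cases g) (simp add: tree_origin_def lamp_act_empty_truncation)

lemma tree_dist_origin_lit_lamp: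
  assumes "finite {i. f i}" "f i" "i < n"
  shows "real_of_int n - 2 * real_of_int i \<le>
    tree_dist tree_origin (truncation f (of_int n))"
proof -
  have "branch_height tree_origin (truncation f (of_int n)) \<le> real_of_int i"
    using assms by (intro branch_height_le_if_differ truncation_in_lamp_tree tree_origin_in_lamp_tree)
      (auto simp: truncation_def tree_origin_def)
  then show ?thesis by (simp add: tree_dist_def tree_origin_def)
qed

lemma lamplighter_bounded_by_displacements:
  assumes fin: "finite {i. f i}"
    and R: "tree_dist tree_origin (truncation f (of_int n)) +
      tree_dist tree_origin (truncation (\<lambda>i. f (- i)) (of_int (- n))) \<le> R"
  shows "(\<forall>i. f i \<longrightarrow> \<bar>real_of_int i\<bar> \<le> R) \<and> \<bar>real_of_int n\<bar> \<le> R"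
proof -
  have "{i. f (- i)} = uminus ` {i. f i}" by force
  then have fin': "finite {i. f (- i)}" using fin by simp
  let ?d1 = "tree_dist tree_origin (truncation f (of_int n))"
  let ?d2 = "tree_dist tree_origin (truncation (\<lambda>i. f (- i)) (of_int (- n)))"
  have n: "\<bar>real_of_int n\<bar> \<le> ?d1" "\<bar>real_of_int n\<bar> \<le> ?d2" "0 \<le> ?d1" "0 \<le> ?d2"
    using abs_height_diff_le_tree_dist[of tree_origin "truncation f (of_int n)"]
      abs_height_diff_le_tree_dist[of tree_origin "truncation (\<lambda>i. f (- i)) (of_int (- n))"]
      tree_dist_nonneg
    by (simp_all add: tree_origin_def)
  have "\<bar>real_of_int i\<bar> \<le> R" if "f i" for i
  proof (cases "i < n")
    case True
    then show ?thesis using tree_dist_origin_lit_lamp[OF fin that True] n R by linarith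
  next
    case False
    then have "i = n \<or> - i < - n" by linarith
    then show ?thesis using tree_dist_origin_lit_lamp[OF fin', of "- i" "- n"] that n R by auto
  qed
  then show ?thesis using n R by auto
qed

lemma finite_bounded_lamplighter_elements:
  "finite {g :: (int \<Rightarrow> bool) \<times> int.
     (\<forall>i. fst g i \<longrightarrow> \<bar>real_of_int i\<bar> \<le> R) \<and> \<bar>real_of_int (snd g)\<bar> \<le> R}"
proof -
  define I where "I = {i :: int. - R \<le> real_of_int i \<and> real_of_int i \<le> R}"
  have "finite I" unfolding I_def by (rule finite_int_interval)
  moreover have "{g :: (int \<Rightarrow> bool) \<times> int.
     (\<forall>i. fst g i \<longrightarrow> \<bar>real_of_int i\<bar> \<le> R) \<and> \<bar>real_of_int (snd g)\<bar> \<le> R} \<subseteq>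
      (\<lambda>(S, n). ((\<lambda>i. i \<in> S), n)) ` (Pow I \<times> I)"
  proof
    fix g :: "(int \<Rightarrow> bool) \<times> int"
    assume "g \<in> {g. (\<forall>i. fst g i \<longrightarrow> \<bar>real_of_int i\<bar> \<le> R) \<and> \<bar>real_of_int (snd g)\<bar> \<le> R}"
    then have "({i. fst g i}, snd g) \<in> Pow I \<times> I" by (auto simp: I_def abs_le_iff)
    moreover have "g = (\<lambda>(S, n). ((\<lambda>i. i \<in> S), n)) ({i. fst g i}, snd g)" by simp
    ultimately show "g \<in> (\<lambda>(S, n). ((\<lambda>i. i \<in> S), n)) ` (Pow I \<times> I)" by blast
  qed
  ultimately show ?thesis by (auto elim: finite_subset)
qed

lemma finite_small_joint_displacement:
  assumes z: "z \<in> coded_tree" and z': "z' \<in> coded_tree"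
  shows "finite {g \<in> carrier lamplighter.
    coded_tree_dist z (coded_tree_action g z) +
    coded_tree_dist z' (coded_tree_action (lamp_reflect g) z') \<le> r}"
proof -
  define R where
    "R = r + 2 * coded_tree_dist (encode tree_origin) z + 2 * coded_tree_dist (encode tree_origin) z'"
  have displacement: "coded_tree_dist (encode tree_origin) (coded_tree_action g (encode tree_origin)) \<le>
      coded_tree_dist w (coded_tree_action g w) + 2 * coded_tree_dist (encode tree_origin) w"
    if "g \<in> carrier lamplighter" "w \<in> coded_tree" for g w
    using isometric_action_coded_tree_action that tree_origin_in_lamp_tree
    by (intro coded_tree.isometry_displacement_le)
      (auto simp: isometric_action_def coded_tree_action_in_coded_tree encode_in_coded_tree)
  have "finite {g :: (int \<Rightarrow> bool) \<times> int.
     (\<forall>i. fst g i \<longrightarrow> \<bar>real_of_int i\<bar> \<le> R) \<and> \<bar>real_of_int (snd g)\<bar> \<le> R}"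
    by (rule finite_bounded_lamplighter_elements)
  moreover have "(\<forall>i. f i \<longrightarrow> \<bar>real_of_int i\<bar> \<le> R) \<and> \<bar>real_of_int n\<bar> \<le> R"
    if "(f, n) \<in> carrier lamplighter"
      "coded_tree_dist z (coded_tree_action (f, n) z) +
         coded_tree_dist z' (coded_tree_action (lamp_reflect (f, n)) z') \<le> r" for f n
  proof (rule lamplighter_bounded_by_displacements)
    have fin: "finite {i. f i}" "finite {i. f (- i)}"
      using that(1) lamp_reflect_carrier[OF that(1)] by (simp_all add: carrier_lamplighter lamp_reflect_def)
    then show "finite {i. f i}" by simp
    show "tree_dist tree_origin (truncation f (of_int n)) +
        tree_dist tree_origin (truncation (\<lambda>i. f (- i)) (of_int (- n))) \<le> R"
      using displacement[OF that(1) z] displacement[OF lamp_reflect_carrier[OF that(1)] z'] that(2)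
        fin by (simp add: R_def lamp_reflect_def truncation_in_lamp_tree coded_tree_action_encode
          tree_origin_in_lamp_tree lamp_act_tree_origin)
  qed
  ultimately show ?thesis by (auto elim!: finite_subset[rotated])
qed

theorem lemma3p15:
  shows "PPT lamplighter"
proof -
  define \<phi> :: "nat \<Rightarrow> (int \<Rightarrow> bool) \<times> int \<Rightarrow> real \<Rightarrow> real"
    where "\<phi> i = (if i = 0 then coded_tree_action else (\<lambda>g. coded_tree_action (lamp_reflect g)))" for i
  have "isometric_action lamplighter coded_tree_metric (\<phi> i)"
    and "cocompact_action lamplighter coded_tree_metric (\<phi> i)" for i
    using isometric_action_coded_tree_action cocompact_action_coded_tree_action
      isometric_action_precompose[OF isometric_action_coded_tree_action lamp_reflect_hom]
      cocompact_action_precompose[OF cocompact_action_coded_tree_action lamp_reflect_image]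
    by (simp_all add: \<phi>_def)
  moreover have
    "finite {g \<in> carrier lamplighter. (\<Sum>i<2. mdist coded_tree_metric (z i) (\<phi> i g (z i))) \<le> r}"
    if "\<forall>i<2. z i \<in> mspace coded_tree_metric" for z r
    using that finite_small_joint_displacement[of "z 0" "z 1" r] by (simp add: \<phi>_def numeral_2_eq_2)
  ultimately show ?thesis
    unfolding PPT_def
    using unbounded_coded_tree_metric proper_coded_tree_metric quasi_tree_coded_tree_metric
    by (intro exI[of _ 2] exI[of _ "\<lambda>_. coded_tree_metric"] exI[of _ \<phi>]) simp
qed

end
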